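(* Let $\mathbf x,\mathbf y\in(\Sigma^* )^\circ$ and let $\mathbf s=-g(\mathbf x)$, $\mathbf t=-g(\mathbf y)$. If $\|\mathbf x-\mathbf y\|_{\mathbf x}<\tfrac12$, then $\mathbf x$ certifies $\mathbf t$, i.e. $H(\mathbf x)^{-1}\mathbf t\in\Sigma^*$.
   Context: Fix nonzero real polynomials $g_1,\dots,g_m$ in $n$ variables and nonnegative integers $d_1,\dots,d_m$. Let $\mathcal V$ be the real vector space of polynomials $\sum_{i=1}^m g_i r_i$ with $\deg r_i\le 2d_i$, and $\Sigma\subseteq\mathcal V$ the cone of weighted sums of squares $\sum_i g_i\sigma_i$ with each $\sigma_i$ a sum of squares of polynomials of degree at most $d_i$; assume $\Sigma$ is a proper cone. Fix a basis $\mathbf q=(q_1,\dots,q_U)$ of $\mathcal V$, identify $\mathcal V$ and its dual with $\mathbb R^U$ with the standard inner product and Euclidean norm $\|\cdot\|$; $\Sigma^*$ is the dual cone, $K^\circ$ the interior of $K$. For each $i$ fix a basis $\mathbf p_i$ (of size $L_i$) of polynomials of degree at most $d_i$ and let $\Lambda_i:\mathbb R^U\to\mathbb S^{L_i}$ be the unique linear map with $\sum_u q_u\Lambda_i(\mathbf e_u)=g_i\mathbf p_i\mathbf p_i^T$; $\Lambda=\Lambda_1\oplus\cdots\oplus\Lambda_m$ (block diagonal), $\Lambda^*$ its adjoint. Then $(\Sigma^* )^\circ=\{\mathbf x:\Lambda(\mathbf x)\succ0\}$ and $\Sigma^*=\{\mathbf x:\Lambda(\mathbf x)\succeq0\}$.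 On $(\Sigma^* )^\circ$ let $f(\mathbf x)=-\ln\det\Lambda(\mathbf x)$, with gradient $g(\mathbf x)=-\Lambda^*(\Lambda(\mathbf x)^{-1})$ (not to be confused with the weights $g_i$) and Hessian $H(\mathbf x)\mathbf w=\Lambda^*(\Lambda(\mathbf x)^{-1}\Lambda(\mathbf w)\Lambda(\mathbf x)^{-1})$, positive definite. The local norm is $\|\mathbf v\|_{\mathbf x}=\|H(\mathbf x)^{1/2}\mathbf v\|$. *)

theory Defs
  imports "HOL-Analysis.Analysis" "HOL-Library.Poly_Mapping"
begin

type_synonym 'v mpoly = "('v \<Rightarrow>\<^sub>0 nat) \<Rightarrow>\<^sub>0 real"

definition tdeg :: "'v mpoly \<Rightarrow> nat" where
  "tdeg p = Max (insert 0 ((\<lambda>a. sum (Poly_Mapping.lookup a) (Poly_Mapping.keys a)) ` Poly_Mapping.keys p))"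

definition psmult :: "real \<Rightarrow> 'v mpoly \<Rightarrow> 'v mpoly" where
  "psmult c p = Poly_Mapping.map (\<lambda>a. c * a) p"

definition polys_le :: "nat \<Rightarrow> 'v mpoly set" where
  "polys_le d = {p. tdeg p \<le> d}"

definition fam_basis_on :: "'i set \<Rightarrow> ('i \<Rightarrow> 'v mpoly) \<Rightarrow> 'v mpoly set \<Rightarrow> bool" where
  "fam_basis_on S b B \<longleftrightarrow> finite S \<and>
     (\<forall>c. (\<Sum>i\<in>S. psmult (c i) (b i)) = 0 \<longrightarrow> (\<forall>i\<in>S. c i = 0)) \<and>
     {(\<Sum>i\<in>S. psmult (c i) (b i)) | c. True} = B"

definition sos_le :: "nat \<Rightarrow> 'v mpoly set" where
  "sos_le d = {(\<Sum>h\<leftarrow>hs. h * h) | hs. \<forall>h\<in>set hs. tdeg h \<le> d}"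

definition Vspace :: "('m::finite \<Rightarrow> 'v mpoly) \<Rightarrow> ('m \<Rightarrow> nat) \<Rightarrow> 'v mpoly set" where
  "Vspace g d = {(\<Sum>i\<in>UNIV. g i * r i) | r. \<forall>i. tdeg (r i) \<le> 2 * d i}"

definition WSOS :: "('m::finite \<Rightarrow> 'v mpoly) \<Rightarrow> ('m \<Rightarrow> nat) \<Rightarrow> 'v mpoly set" where
  "WSOS g d = {(\<Sum>i\<in>UNIV. g i * \<sigma> i) | \<sigma>. \<forall>i. \<sigma> i \<in> sos_le (d i)}"

text \<open>Identification of R^U with V via the basis q.\<close>
definition lincomb :: "('u::finite \<Rightarrow> 'v mpoly) \<Rightarrow> real^'u \<Rightarrow> 'v mpoly" where
  "lincomb q x = (\<Sum>u\<in>UNIV. psmult (x $ u) (q u))"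

definition Sigma_vec :: "('u::finite \<Rightarrow> 'v mpoly) \<Rightarrow> ('m::finite \<Rightarrow> 'v mpoly) \<Rightarrow> ('m \<Rightarrow> nat)
    \<Rightarrow> (real^'u) set" where
  "Sigma_vec q g d = {x. lincomb q x \<in> WSOS g d}"

definition proper_cone :: "'a::euclidean_space set \<Rightarrow> bool" where
  "proper_cone K \<longleftrightarrow> convex_cone K \<and> closed K \<and> interior K \<noteq> {} \<and> K \<inter> uminus ` K = {0}"

definition dual_cone :: "'a::real_inner set \<Rightarrow> 'a set" where
  "dual_cone K = {y. \<forall>x\<in>K. 0 \<le> inner x y}"

text \<open>Lambda(x) = sum_u x_u Lambda(e_u); here the block-diagonal Lambda is one matrix
  whose rows are indexed by 'r, row r belonging to block blk r.\<close>
definition LamX :: "('u::finite \<Rightarrow> real^'r^'r) \<Rightarrow> real^'u \<Rightarrow> real^'r^'r" where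
  "LamX Lam x = (\<Sum>u\<in>UNIV. x $ u *\<^sub>R Lam u)"

text \<open>Adjoint of Lambda w.r.t. the trace (Frobenius) inner product.\<close>
definition Lam_adj :: "('u::finite \<Rightarrow> real^'r^'r) \<Rightarrow> real^'r^'r \<Rightarrow> real^'u" where
  "Lam_adj Lam M = (\<chi> u. trace (transpose (Lam u) ** M))"

definition grad :: "('u::finite \<Rightarrow> real^'r^'r) \<Rightarrow> real^'u \<Rightarrow> real^'u" where
  "grad Lam x = - Lam_adj Lam (matrix_inv (LamX Lam x))"

text \<open>Hessian as a U x U matrix: column w is H(x) e_w.\<close>
definition hess :: "('u::finite \<Rightarrow> real^'r^'r) \<Rightarrow> real^'u \<Rightarrow> real^'u^'u" where
  "hess Lam x = (\<chi> u w. Lam_adj Lam (matrix_inv (LamX Lam x) ** LamX Lam (axis w 1)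
                                       ** matrix_inv (LamX Lam x)) $ u)"

definition psd_mat :: "real^'n^'n \<Rightarrow> bool" where
  "psd_mat A \<longleftrightarrow> transpose A = A \<and> (\<forall>v. 0 \<le> v \<bullet> (A *v v))"

definition mat_sqrt :: "real^'n^'n \<Rightarrow> real^'n^'n" where
  "mat_sqrt A = (THE R. psd_mat R \<and> R ** R = A)"

definition local_norm :: "('u::finite \<Rightarrow> real^'r^'r) \<Rightarrow> real^'u \<Rightarrow> real^'u \<Rightarrow> real" where
  "local_norm Lam x v = norm (mat_sqrt (hess Lam x) *v v)"

end

theory Submission
  imports Defs
begin

text \<open>
  Write \<open>X = \<Lambda>(x)\<close>, \<open>Y = \<Lambda>(y)\<close> and \<open>W\<^sub>X(M) = X\<^sup>-\<^sup>1\<^sup>/\<^sup>2 M X\<^sup>-\<^sup>1\<^sup>/\<^sup>2\<close>.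
  The Hessian satisfies \<open>v \<bullet> H(x) w = W\<^sub>X(\<Lambda> v) \<bullet> W\<^sub>X(\<Lambda> w)\<close> (Frobenius inner product),
  so the local norm of \<open>x - y\<close> is the Frobenius norm of \<open>D = W\<^sub>X(Y - X)\<close>. If \<open>\<parallel>D\<parallel> < 1/2\<close>,
  then \<open>E = X\<^sup>1\<^sup>/\<^sup>2 (Y\<^sup>-\<^sup>1 - X\<^sup>-\<^sup>1) X\<^sup>1\<^sup>/\<^sup>2 = (I + D)\<^sup>-\<^sup>1 - I\<close> has \<open>\<parallel>E\<parallel> < 1\<close>.
  For \<open>z = H(x)\<^sup>-\<^sup>1 t\<close> we have \<open>H(x)(z - x) = \<Lambda>\<^sup>*(Y\<^sup>-\<^sup>1 - X\<^sup>-\<^sup>1)\<close>, hence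
  \<open>W = W\<^sub>X(\<Lambda>(z - x))\<close> satisfies \<open>\<parallel>W\<parallel>\<^sup>2 = tr(W E) \<le> \<parallel>W\<parallel> \<parallel>E\<parallel>\<close>, so \<open>\<parallel>W\<parallel> < 1\<close> and
  \<open>\<Lambda>(z) = X\<^sup>1\<^sup>/\<^sup>2 (I + W) X\<^sup>1\<^sup>/\<^sup>2\<close> is positive semidefinite.

  Finally, \<open>\<Sigma>\<close> is generated by the vectors \<open>(a\<^sup>T \<Lambda>(e\<^sub>u) a)\<^sub>u\<close> with \<open>a\<close> supported on one
  block, because \<open>a\<^sup>T \<Lambda>\<^sub>i(\<cdot>) a\<close> corresponds to \<open>g\<^sub>i (a\<^sup>T p\<^sub>i)\<^sup>2\<close>. Hence \<open>\<Lambda>(z) \<succeq> 0\<close> implies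
  \<open>z \<in> \<Sigma>\<^sup>*\<close>; the same description shows that \<open>\<Lambda>\<close> is injective and that \<open>\<Lambda>(x) \<succ> 0\<close> on the
  interior of \<open>\<Sigma>\<^sup>*\<close>.
\<close>

section \<open>Quadratic forms\<close>

definition quad_form :: "real^'n^'n \<Rightarrow> real^'n \<Rightarrow> real" where
  "quad_form A v = v \<bullet> (A *v v)"

definition pd_mat :: "real^'n^'n \<Rightarrow> bool" where
  "pd_mat A \<longleftrightarrow> transpose A = A \<and> (\<forall>v. v \<noteq> 0 \<longrightarrow> 0 < quad_form A v)"

lemma psd_mat_iff_quad_form: "psd_mat A \<longleftrightarrow> transpose A = A \<and> (\<forall>v. 0 \<le> quad_form A v)"
  by (simp add: psd_mat_def quad_form_def)

lemma pd_imp_psd_mat: "pd_mat A \<Longrightarrow> psd_mat A"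
  unfolding pd_mat_def psd_mat_iff_quad_form by (metis order_refl quad_form_def inner_zero_left less_imp_le)

lemma inner_matrix_vector_symmetric:
  fixes A :: "real^'n^'n"
  assumes "transpose A = A"
  shows "x \<bullet> (A *v y) = (A *v x) \<bullet> y"
  by (metis assms dot_lmul_matrix transpose_matrix_vector)

lemma quad_form_add_scaleR:
  fixes A :: "real^'n^'n"
  assumes "transpose A = A"
  shows "quad_form A (v + t *\<^sub>R w) = quad_form A v + 2 * t * (w \<bullet> (A *v v)) + t\<^sup>2 * quad_form A w"
proof -
  have "v \<bullet> (A *v w) = w \<bullet> (A *v v)"
    using inner_matrix_vector_symmetric[OF assms, of v w] by (simp add: inner_commute)
  then show ?thesis
    unfolding quad_form_def
    by (simp add: matrix_vector_right_distrib matrix_vector_mult_scaleR inner_add_left inner_add_right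
        power2_eq_square algebra_simps)
qed

lemma quad_form_scaleR: "quad_form A (c *\<^sub>R v) = c\<^sup>2 * quad_form A v"
  by (simp add: quad_form_def matrix_vector_mult_scaleR power2_eq_square)

lemma quad_form_matrix_add: "quad_form (A + B) v = quad_form A v + quad_form B v"
  by (simp add: quad_form_def matrix_vector_mult_add_rdistrib inner_add_right)

lemma quad_form_matrix_scaleR: "quad_form (c *\<^sub>R A) v = c * quad_form A v"
  by (simp add: quad_form_def scaleR_matrix_vector_assoc[symmetric])

lemma quad_form_matrix_sum: "quad_form (\<Sum>i\<in>I. A i) v = (\<Sum>i\<in>I. quad_form (A i) v)"
  by (induction I rule: infinite_finite_induct)
    (simp_all add: quad_form_matrix_add, simp_all add: quad_form_def)

lemma quad_form_entries: "quad_form A v = (\<Sum>r\<in>UNIV. \<Sum>s\<in>UNIV. v$r * v$s * A$r$s)"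
  by (simp add: quad_form_def inner_vec_def matrix_vector_mult_def sum_distrib_left
      mult.commute mult.left_commute)

lemma quad_form_congruence:
  fixes S :: "real^'n^'m" and M :: "real^'m^'m"
  shows "quad_form (transpose S ** M ** S) a = quad_form M (S *v a)"
proof -
  have "a \<bullet> (transpose S *v w) = (S *v a) \<bullet> w" for w
    by (metis dot_lmul_matrix inner_commute transpose_matrix_vector)
  then show ?thesis
    by (simp add: quad_form_def matrix_vector_mul_assoc[symmetric] del: transpose_matrix_vector)
qed

lemma symmetric_if_inner_mult_vector_symmetric:
  fixes A :: "real^'n^'n"
  assumes "\<And>v w. v \<bullet> (A *v w) = w \<bullet> (A *v v)"
  shows "transpose A = A"
proof -
  have "(A *v axis j 1) $ i = A $ i $ j" for i j
  proof -
    have "(A *v axis j 1) $ i = (\<Sum>k\<in>UNIV. if k = j then A $ i $ k else 0)"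
      by (simp add: matrix_vector_mult_def axis_def if_distrib cong: if_cong)
    then show ?thesis
      by simp
  qed
  then have entry: "A $ i $ j = axis i 1 \<bullet> (A *v axis j 1)" for i j
    by (simp add: inner_axis')
  show ?thesis
    using assms by (simp add: vec_eq_iff transpose_def entry)
qed

lemma linear_coeff_zero_if_quadratic_nonneg:
  fixes c k :: real
  assumes "\<And>t. 0 \<le> 2 * t * c + t\<^sup>2 * k"
  shows "c = 0"
proof (rule ccontr)
  assume "c \<noteq> 0"
  define K where "K = \<bar>k\<bar> + 1"
  have "K > 0" and "2 * K - k > 0"
    unfolding K_def by simp_all
  have "0 \<le> (2 * (- c / K) * c + (- c / K)\<^sup>2 * k) * K\<^sup>2"
    using assms[of "- c / K"] by simp
  also have "\<dots> = - (c\<^sup>2 * (2 * K - k))"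
    using \<open>K > 0\<close> by (simp add: field_simps power2_eq_square)
  finally show False
    using \<open>c \<noteq> 0\<close> \<open>2 * K - k > 0\<close> by (simp add: mult_le_0_iff)
qed

lemma psd_mat_quad_form_eq_0_imp:
  fixes A :: "real^'n^'n"
  assumes "psd_mat A" "quad_form A v = 0"
  shows "A *v v = 0"
proof -
  have "w \<bullet> (A *v v) = 0" for w
  proof (rule linear_coeff_zero_if_quadratic_nonneg)
    fix t :: real
    show "0 \<le> 2 * t * (w \<bullet> (A *v v)) + t\<^sup>2 * quad_form A w"
      using assms quad_form_add_scaleR[of A v t w] by (simp add: psd_mat_iff_quad_form) metis
  qed
  from this[of "A *v v"] show ?thesis by simp
qed

section \<open>Spectral theorem and matrix square roots\<close>

lemma symmetric_matrix_eigenvector_if_max_quad_form: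
  fixes A :: "real^'n^'n"
  assumes sym: "transpose A = A" and S: "subspace S" and inv: "\<And>x. x \<in> S \<Longrightarrow> A *v x \<in> S"
    and vS: "v \<in> S" and vv: "v \<bullet> v = 1"
    and max: "\<And>u. u \<in> S \<Longrightarrow> quad_form A u \<le> quad_form A v * (norm u)\<^sup>2"
  shows "A *v v = quad_form A v *\<^sub>R v"
proof -
  define \<mu> where "\<mu> = quad_form A v"
  have orth: "w \<bullet> (A *v v) = 0" if w: "w \<in> S" "w \<bullet> v = 0" for w
  proof -
    have "0 \<le> 2 * t * (- (w \<bullet> (A *v v))) + t\<^sup>2 * (\<mu> * (norm w)\<^sup>2 - quad_form A w)" for t
    proof -
      have "(norm (v + t *\<^sub>R w))\<^sup>2 = 1 + t\<^sup>2 * (norm w)\<^sup>2"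
        unfolding power2_norm_eq_inner using w(2) vv
        by (simp add: inner_add_left inner_add_right inner_commute power2_eq_square)
      moreover have "v + t *\<^sub>R w \<in> S"
        using vS w(1) S by (simp add: subspace_add subspace_scale)
      ultimately show ?thesis
        using max[of "v + t *\<^sub>R w"] quad_form_add_scaleR[OF sym, of v t w]
        by (simp add: \<mu>_def algebra_simps)
    qed
    from linear_coeff_zero_if_quadratic_nonneg[OF this] show ?thesis by simp
  qed
  define e where "e = A *v v - \<mu> *\<^sub>R v"
  have "e \<in> S"
    unfolding e_def using inv[OF vS] vS S by (simp add: subspace_diff subspace_scale)
  moreover have "e \<bullet> v = 0"
    unfolding e_def \<mu>_def quad_form_def using vv by (simp add: inner_diff_left inner_diff_right inner_commute)
  ultimately have "e \<bullet> e = 0"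
    using orth unfolding e_def by (simp add: inner_diff_right)
  then show ?thesis
    by (simp add: e_def \<mu>_def)
qed

lemma symmetric_matrix_eigenvector_in_invariant_subspace:
  fixes A :: "real^'n^'n"
  assumes sym: "transpose A = A" and S: "subspace S" and inv: "\<And>x. x \<in> S \<Longrightarrow> A *v x \<in> S"
    and "S \<noteq> {0}"
  obtains v where "v \<in> S" "norm v = 1" "A *v v = quad_form A v *\<^sub>R v"
proof -
  define K where "K = S \<inter> sphere 0 1"
  obtain x where x: "x \<in> S" "x \<noteq> 0"
    using \<open>S \<noteq> {0}\<close> S subspace_0 by blast
  then have "(1 / norm x) *\<^sub>R x \<in> K"
    unfolding K_def using S by (simp add: subspace_scale)
  moreover have "compact K"
    unfolding K_def by (simp add: S closed_subspace closed_Int_compact)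
  moreover have "continuous_on K (quad_form A)"
    unfolding quad_form_def by (intro continuous_intros)
  ultimately obtain v where v: "v \<in> K" and v_max: "\<And>u. u \<in> K \<Longrightarrow> quad_form A u \<le> quad_form A v"
    using continuous_attains_sup by (metis empty_iff)
  have vS: "v \<in> S" and vv: "v \<bullet> v = 1"
    using v by (auto simp: K_def dot_square_norm)
  have "quad_form A u \<le> quad_form A v * (norm u)\<^sup>2" if "u \<in> S" for u
  proof (cases "u = 0")
    case False
    have "(1 / norm u) *\<^sub>R u \<in> K"
      unfolding K_def using that False S by (simp add: subspace_scale)
    then have "quad_form A u / (norm u)\<^sup>2 \<le> quad_form A v"
      using v_max[of "(1 / norm u) *\<^sub>R u"] by (simp add: quad_form_scaleR power_divide)
    then show ?thesis
      using False by (simp add: divide_le_eq)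
  qed (simp add: quad_form_def)
  then show ?thesis
    using that vS vv symmetric_matrix_eigenvector_if_max_quad_form[OF sym S inv vS vv]
    by (simp add: norm_eq_1)
qed

lemma orthogonal_complement_of_eigenvector_in_invariant_subspace:
  fixes A :: "real^'n^'n"
  assumes sym: "transpose A = A" and S: "subspace S" and inv: "\<And>x. x \<in> S \<Longrightarrow> A *v x \<in> S"
    and vS: "v \<in> S" and vv: "v \<bullet> v = 1" and ev: "A *v v = \<mu> *\<^sub>R v"
  defines "S' \<equiv> {w \<in> S. w \<bullet> v = 0}"
  shows "subspace S'" "\<And>x. x \<in> S' \<Longrightarrow> A *v x \<in> S'" "dim S' < dim S" "S \<subseteq> span (insert v S')"
proof -
  show "subspace S'"
    unfolding S'_def using S by (auto simp: subspace_def inner_add_left)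
  show "A *v x \<in> S'" if "x \<in> S'" for x
    using that inv ev inner_matrix_vector_symmetric[OF sym, of x v] by (simp add: S'_def)
  show "dim S' < dim S"
  proof (rule dim_psubset)
    have "v \<notin> S'"
      using vv by (simp add: S'_def)
    then have "S' \<subset> S"
      using vS unfolding S'_def by blast
    then show "span S' \<subset> span S"
      using \<open>subspace S'\<close> S by (metis span_eq_iff)
  qed
  show "S \<subseteq> span (insert v S')"
  proof
    fix x assume "x \<in> S"
    then have "x - (x \<bullet> v) *\<^sub>R v \<in> S'"
      unfolding S'_def using vS S vv by (simp add: subspace_diff subspace_scale inner_diff_left)
    then show "x \<in> span (insert v S')"
      unfolding span_breakdown_eq by (blast intro: span_base)
  qed
qed

lemma symmetric_matrix_eigenbasis_of_invariant_subspace: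
  fixes A :: "real^'n^'n"
  assumes sym: "transpose A = A"
  shows "subspace S \<Longrightarrow> (\<And>x. x \<in> S \<Longrightarrow> A *v x \<in> S) \<Longrightarrow>
    \<exists>B. B \<subseteq> S \<and> pairwise orthogonal B \<and> (\<forall>b\<in>B. norm b = 1 \<and> A *v b = quad_form A b *\<^sub>R b) \<and> span B = S"
proof (induction "dim S" arbitrary: S rule: less_induct)
  case less
  show ?case
  proof (cases "S = {0}")
    case True
    then show ?thesis by (intro exI[of _ "{}"]) auto
  next
    case False
    then obtain v where vS: "v \<in> S" and nv: "norm v = 1" and ev: "A *v v = quad_form A v *\<^sub>R v"
      using symmetric_matrix_eigenvector_in_invariant_subspace[OF sym less.prems] by blast
    have vv: "v \<bullet> v = 1"
      using nv by (simp add: norm_eq_1)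
    define S' where "S' = {w \<in> S. w \<bullet> v = 0}"
    note S' = orthogonal_complement_of_eigenvector_in_invariant_subspace[OF sym less.prems vS vv ev,
        folded S'_def]
    obtain B' where B': "B' \<subseteq> S'" "pairwise orthogonal B'"
      "\<forall>b\<in>B'. norm b = 1 \<and> A *v b = quad_form A b *\<^sub>R b" "span B' = S'"
      using less.hyps[OF S'(3,1,2)] by blast
    have "insert v B' \<subseteq> S"
      using B'(1) vS unfolding S'_def by auto
    moreover have "S \<subseteq> span (insert v B')"
    proof -
      have "span S' = span B'"
        by (simp add: B'(4)[symmetric])
      then show ?thesis
        using S'(4) unfolding subset_iff span_breakdown_eq by simp
    qed
    moreover have "pairwise orthogonal (insert v B')"
      using B'(1,2) by (intro pairwise_orthogonal_insert) (auto simp: S'_def orthogonal_def inner_commute)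
    ultimately show ?thesis
      using B'(3) nv ev less.prems(1)
      by (intro exI[of _ "insert v B'"]) (auto simp: span_minimal subset_antisym)
  qed
qed

lemma symmetric_matrix_eigenbasis:
  fixes A :: "real^'n^'n"
  assumes "transpose A = A"
  obtains B where "finite B" "pairwise orthogonal B" "\<And>b. b \<in> B \<Longrightarrow> norm b = 1"
    "\<And>b. b \<in> B \<Longrightarrow> A *v b = quad_form A b *\<^sub>R b" "span B = UNIV"
  using symmetric_matrix_eigenbasis_of_invariant_subspace[OF assms, of UNIV]
  by (metis pairwise_orthogonal_imp_finite subspace_UNIV UNIV_I)

lemma matrix_vector_mult_orthonormal_basis_expand:
  fixes A :: "real^'n^'n"
  assumes "finite B" "pairwise orthogonal B" "\<And>b. b \<in> B \<Longrightarrow> norm b = 1" "span B = UNIV"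
  shows "A *v x = (\<Sum>b\<in>B. (x \<bullet> b) *\<^sub>R (A *v b))"
proof -
  have "A *v x = A *v (\<Sum>b\<in>B. (x \<bullet> b) *\<^sub>R b)"
    using orthonormal_basis_expand[of B x] assms by simp
  also have "\<dots> = (\<Sum>b\<in>B. (x \<bullet> b) *\<^sub>R (A *v b))"
    by (simp add: linear_sum[OF matrix_vector_mul_linear] matrix_vector_mult_scaleR)
  finally show ?thesis .
qed

lemma transpose_sum: "transpose (\<Sum>i\<in>I. A i) = (\<Sum>i\<in>I. transpose (A i :: real^'n^'m))"
  by (induction I rule: infinite_finite_induct) (simp_all add: transpose_def vec_eq_iff)

lemma sum_matrix_vector_mult: "(\<Sum>i\<in>I. A i) *v (x::real^'n) = (\<Sum>i\<in>I. A i *v x)"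
  by (induction I rule: infinite_finite_induct) (simp_all add: matrix_vector_mult_add_rdistrib)

definition outer_prod :: "real^'n \<Rightarrow> real^'n^'n" where
  "outer_prod b = (\<chi> i j. b$i * b$j)"

lemma outer_prod_mult_vector: "outer_prod b *v x = (b \<bullet> x) *\<^sub>R b"
  by (simp add: outer_prod_def matrix_vector_mult_def inner_vec_def vec_eq_iff sum_distrib_left
      sum_distrib_right mult.commute mult.left_commute)

lemma transpose_outer_prod: "transpose (outer_prod b) = outer_prod b"
  by (simp add: outer_prod_def transpose_def vec_eq_iff mult.commute)

lemma inner_orthonormal_sum:
  assumes "finite B" "pairwise orthogonal B" "\<And>b. b \<in> B \<Longrightarrow> norm b = 1" "c \<in> B"
  shows "c \<bullet> (\<Sum>b\<in>B. f b *\<^sub>R b) = f c"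
proof -
  have "c \<bullet> (\<Sum>b\<in>B. f b *\<^sub>R b) = (\<Sum>b\<in>B. if b = c then f c else 0)"
    unfolding inner_sum_right using assms(2-4)
    by (intro sum.cong) (auto simp: pairwise_def orthogonal_def norm_eq_1 inner_commute)
  then show ?thesis
    using assms(1,4) by simp
qed

lemma psd_mat_sqrt_exists:
  fixes A :: "real^'n^'n"
  assumes "psd_mat A"
  obtains R where "psd_mat R" "R ** R = A"
proof -
  have sym: "transpose A = A" and psd: "\<And>v. 0 \<le> quad_form A v"
    using assms by (auto simp: psd_mat_iff_quad_form)
  obtain B where B: "finite B" "pairwise orthogonal B" "\<And>b. b \<in> B \<Longrightarrow> norm b = 1"
    "\<And>b. b \<in> B \<Longrightarrow> A *v b = quad_form A b *\<^sub>R b" "span B = UNIV"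
    using symmetric_matrix_eigenbasis[OF sym] by blast
  define R where "R = (\<Sum>b\<in>B. sqrt (quad_form A b) *\<^sub>R outer_prod b)"
  have R_mult: "R *v x = (\<Sum>b\<in>B. (sqrt (quad_form A b) * (b \<bullet> x)) *\<^sub>R b)" for x
    unfolding R_def
    by (simp add: sum_matrix_vector_mult scaleR_matrix_vector_assoc[symmetric] outer_prod_mult_vector)
  have "transpose R = R"
    unfolding R_def transpose_sum by (simp add: transpose_scalar transpose_outer_prod)
  moreover have "quad_form R v = (\<Sum>b\<in>B. sqrt (quad_form A b) * (b \<bullet> v)\<^sup>2)" for v
    unfolding quad_form_def R_mult
    by (simp add: inner_sum_right power2_eq_square inner_commute mult.commute mult.left_commute)
  ultimately have "psd_mat R"
    using psd by (simp add: psd_mat_iff_quad_form sum_nonneg)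
  moreover have "(R ** R) *v x = A *v x" for x
  proof -
    have "(R ** R) *v x = (\<Sum>c\<in>B. (sqrt (quad_form A c) * (c \<bullet> (R *v x))) *\<^sub>R c)"
      by (subst matrix_vector_mul_assoc[symmetric]) (rule R_mult)
    also have "\<dots> = (\<Sum>c\<in>B. (x \<bullet> c) *\<^sub>R (A *v c))"
    proof (rule sum.cong)
      fix c assume "c \<in> B"
      have "c \<bullet> (R *v x) = sqrt (quad_form A c) * (c \<bullet> x)"
        unfolding R_mult
        by (rule inner_orthonormal_sum[OF B(1,2,3) \<open>c \<in> B\<close>, where f = "\<lambda>b. sqrt (quad_form A b) * (b \<bullet> x)"])
      then show "(sqrt (quad_form A c) * (c \<bullet> (R *v x))) *\<^sub>R c = (x \<bullet> c) *\<^sub>R (A *v c)"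
        using psd[of c] B(4)[OF \<open>c \<in> B\<close>] by (simp add: inner_commute)
    qed simp
    also have "\<dots> = A *v x"
      by (rule matrix_vector_mult_orthonormal_basis_expand[OF B(1,2,3,5), symmetric])
    finally show ?thesis .
  qed
  then have "R ** R = A"
    by (simp add: matrix_eq)
  ultimately show ?thesis
    using that by blast
qed

lemma psd_mat_sqrt_unique:
  fixes R S :: "real^'n^'n"
  assumes R: "psd_mat R" and S: "psd_mat S" and eq: "R ** R = S ** S"
  shows "R = S"
proof -
  define T where "T = R - S"
  have symT: "transpose T = T"
    using R S by (simp add: T_def psd_mat_def transpose_def vec_eq_iff)
  obtain B where B: "finite B" "pairwise orthogonal B" "\<And>b. b \<in> B \<Longrightarrow> norm b = 1"
    "\<And>b. b \<in> B \<Longrightarrow> T *v b = quad_form T b *\<^sub>R b" "span B = UNIV"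
    using symmetric_matrix_eigenbasis[OF symT] by blast
  have "T *v b = 0" if "b \<in> B" for b
  proof -
    define \<mu> where "\<mu> = quad_form T b"
    have Tb: "T *v b = \<mu> *\<^sub>R b"
      using B(4) that by (simp add: \<mu>_def)
    have "R ** T + T ** S = 0"
      using eq unfolding T_def
      by (simp add: matrix_add_ldistrib matrix_vector_mult_diff_rdistrib algebra_simps matrix_eq
          matrix_vector_mul_assoc[symmetric])
    then have "0 = b \<bullet> ((R ** T + T ** S) *v b)"
      by simp
    also have "\<dots> = b \<bullet> (R *v (T *v b)) + b \<bullet> (T *v (S *v b))"
      by (simp add: matrix_vector_mult_add_rdistrib matrix_vector_mul_assoc[symmetric] inner_add_right)
    also have "\<dots> = \<mu> * (quad_form R b + quad_form S b)"
      using inner_matrix_vector_symmetric[OF symT, of b "S *v b"]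
      by (simp add: Tb quad_form_def matrix_vector_mult_scaleR distrib_left)
    finally have "\<mu> * (quad_form R b + quad_form S b) = 0" ..
    moreover have "0 \<le> quad_form R b" "0 \<le> quad_form S b"
      using R S by (auto simp: psd_mat_iff_quad_form)
    ultimately have "\<mu> = 0 \<or> quad_form R b = 0 \<and> quad_form S b = 0"
      by auto
    then show ?thesis
      using Tb psd_mat_quad_form_eq_0_imp[OF R] psd_mat_quad_form_eq_0_imp[OF S]
      by (auto simp: T_def matrix_vector_mult_diff_rdistrib)
  qed
  then have "T *v x = 0" for x
    using matrix_vector_mult_orthonormal_basis_expand[OF B(1,2,3,5), of T x] by simp
  then show ?thesis
    by (simp add: T_def matrix_eq matrix_vector_mult_diff_rdistrib)
qed

lemma mat_sqrt:
  fixes A :: "real^'n^'n"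
  assumes "psd_mat A"
  shows "psd_mat (mat_sqrt A)" "mat_sqrt A ** mat_sqrt A = A"
proof -
  obtain R where "psd_mat R" "R ** R = A"
    using psd_mat_sqrt_exists[OF assms] .
  then have "\<exists>!R. psd_mat R \<and> R ** R = A"
    using psd_mat_sqrt_unique by metis
  then have "psd_mat (mat_sqrt A) \<and> mat_sqrt A ** mat_sqrt A = A"
    unfolding mat_sqrt_def by (rule theI')
  then show "psd_mat (mat_sqrt A)" "mat_sqrt A ** mat_sqrt A = A"
    by auto
qed

lemma norm_mat_sqrt_mult_vector:
  fixes A :: "real^'n^'n"
  assumes "psd_mat A"
  shows "(norm (mat_sqrt A *v v))\<^sup>2 = quad_form A v"
proof -
  let ?R = "mat_sqrt A"
  have "(norm (?R *v v))\<^sup>2 = (?R *v v) \<bullet> (?R *v v)"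
    by (simp add: power2_norm_eq_inner)
  also have "\<dots> = v \<bullet> (?R *v (?R *v v))"
    using mat_sqrt(1)[OF assms] inner_matrix_vector_symmetric[of ?R v "?R *v v"]
    by (simp add: psd_mat_def)
  also have "\<dots> = quad_form A v"
    by (simp add: quad_form_def matrix_vector_mul_assoc mat_sqrt(2)[OF assms])
  finally show ?thesis .
qed

section \<open>Frobenius norm and matrix inverses\<close>

lemma matrix_add_rdistrib: "((A::real^'n^'m) + B) ** C = A ** C + B ** C"
  by (simp add: matrix_matrix_mult_def vec_eq_iff sum.distrib algebra_simps)

lemma matrix_diff_ldistrib: "(A::real^'n^'m) ** (B - C) = A ** B - A ** C"
  by (simp add: matrix_matrix_mult_def vec_eq_iff sum_subtractf algebra_simps)

lemma matrix_diff_rdistrib: "((A::real^'n^'m) - B) ** C = A ** C - B ** C"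
  by (simp add: matrix_matrix_mult_def vec_eq_iff sum_subtractf algebra_simps)

lemma matrix_mult_sum_left: "(\<Sum>i\<in>I. A i) ** (B::real^'n^'m) = (\<Sum>i\<in>I. A i ** B)"
  by (induction I rule: infinite_finite_induct) (simp_all add: matrix_add_rdistrib)

lemma matrix_mult_sum_right: "(A::real^'n^'m) ** (\<Sum>i\<in>I. B i) = (\<Sum>i\<in>I. A ** B i)"
  by (induction I rule: infinite_finite_induct) (simp_all add: matrix_add_ldistrib)

lemma trace_scaleR: "trace (c *\<^sub>R (A::real^'n^'n)) = c * trace A"
  by (simp add: trace_def sum_distrib_left)

lemma trace_sum: "trace (\<Sum>i\<in>I. (A i::real^'n^'n)) = (\<Sum>i\<in>I. trace (A i))"
  by (induction I rule: infinite_finite_induct) (simp_all add: trace_add trace_0[unfolded mat_0])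

lemma trace_mult_eq_inner_transpose: "trace ((A::real^'n^'n) ** B) = A \<bullet> transpose B"
  by (simp add: trace_def matrix_matrix_mult_def inner_vec_def transpose_def)

lemma norm_matrix_vector_mult_le: "norm ((A::real^'n^'m) *v v) \<le> norm A * norm v"
proof (rule power2_le_imp_le)
  have "(norm (A *v v))\<^sup>2 = (\<Sum>i\<in>UNIV. (A$i \<bullet> v)\<^sup>2)"
    unfolding power2_norm_eq_inner inner_vec_def[of "A *v v"] matrix_vector_mul_component
    by (simp add: power2_eq_square)
  also have "\<dots> \<le> (\<Sum>i\<in>UNIV. (norm (A$i))\<^sup>2 * (norm v)\<^sup>2)"
    by (intro sum_mono) (metis Cauchy_Schwarz_ineq2 abs_ge_zero power_mono power_mult_distrib power2_abs)
  also have "\<dots> = (norm A * norm v)\<^sup>2"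
    by (simp add: power2_norm_eq_inner inner_vec_def[of A A] sum_distrib_right power_mult_distrib)
  finally show "(norm (A *v v))\<^sup>2 \<le> (norm A * norm v)\<^sup>2" .
qed simp

lemma norm_transpose: "norm (transpose (A::real^'n^'m)) = norm A"
proof -
  have "transpose A \<bullet> transpose A = A \<bullet> A"
    by (simp add: inner_vec_def transpose_def) (rule sum.swap)
  then show ?thesis
    by (simp add: norm_eq_sqrt_inner)
qed

lemma norm_matrix_mult_le: "norm ((A::real^'n^'m) ** (B::real^'p^'n)) \<le> norm A * norm B"
proof (rule power2_le_imp_le)
  have row: "(A ** B)$i = transpose B *v A$i" for i
    by (simp add: matrix_matrix_mult_def matrix_vector_mult_def transpose_def vec_eq_iff mult.commute)
  have "(norm (A ** B))\<^sup>2 = (\<Sum>i\<in>UNIV. (norm ((A ** B)$i))\<^sup>2)"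
    by (simp add: power2_norm_eq_inner inner_vec_def)
  also have "\<dots> \<le> (\<Sum>i\<in>UNIV. (norm (A$i))\<^sup>2 * (norm B)\<^sup>2)"
  proof (intro sum_mono)
    fix i
    have "norm ((A ** B)$i) \<le> norm B * norm (A$i)"
      by (metis row norm_transpose norm_matrix_vector_mult_le)
    then show "(norm ((A ** B)$i))\<^sup>2 \<le> (norm (A$i))\<^sup>2 * (norm B)\<^sup>2"
      by (simp add: power_mono power_mult_distrib[symmetric] mult.commute)
  qed
  also have "\<dots> = (norm A * norm B)\<^sup>2"
    by (simp add: power2_norm_eq_inner inner_vec_def[of A A] sum_distrib_right power_mult_distrib)
  finally show "(norm (A ** B))\<^sup>2 \<le> (norm A * norm B)\<^sup>2" .
qed simp

lemma matrix_inv_inverse: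
  fixes A :: "real^'n^'n"
  assumes "invertible A"
  shows "A ** matrix_inv A = mat 1" "matrix_inv A ** A = mat 1"
proof -
  have "\<exists>A'. A ** A' = mat 1 \<and> A' ** A = mat 1"
    using assms invertible_def by blast
  then have "A ** matrix_inv A = mat 1 \<and> matrix_inv A ** A = mat 1"
    unfolding matrix_inv_def by (rule someI_ex)
  then show "A ** matrix_inv A = mat 1" "matrix_inv A ** A = mat 1"
    by auto
qed

lemma matrix_inv_unique:
  fixes A B :: "real^'n^'n"
  assumes "A ** B = mat 1"
  shows "matrix_inv A = B"
proof -
  have "invertible A"
    using assms matrix_left_right_inverse invertible_def by blast
  then have "matrix_inv A = matrix_inv A ** (A ** B)"
    using assms by simp
  also have "\<dots> = B"
    by (simp add: matrix_mul_assoc matrix_inv_inverse \<open>invertible A\<close>)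
  finally show ?thesis .
qed

lemma transpose_matrix_inv_symmetric:
  fixes A :: "real^'n^'n"
  assumes "invertible A" "transpose A = A"
  shows "transpose (matrix_inv A) = matrix_inv A"
proof -
  have "transpose (matrix_inv A) ** A = mat 1"
    using arg_cong[OF matrix_inv_inverse(1)[OF assms(1)], of transpose] assms(2)
    by (simp add: matrix_transpose_mul)
  then show ?thesis
    using matrix_inv_unique matrix_left_right_inverse by metis
qed

lemma invertible_iff_ker_0: "invertible (A::real^'n^'n) \<longleftrightarrow> (\<forall>v. A *v v = 0 \<longrightarrow> v = 0)"
  by (metis invertible_left_inverse matrix_left_invertible_ker)

lemma pd_mat_invertible: "pd_mat A \<Longrightarrow> invertible A"
  unfolding invertible_iff_ker_0 pd_mat_def quad_form_def by force

lemma norm_identity_plus_inverse_minus_identity: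
  fixes D J :: "real^'n^'n"
  assumes "norm D < 1/2" and "(mat 1 + D) ** J = mat 1"
  shows "norm (J - mat 1) < 1"
proof -
  define E where "E = J - mat 1"
  have "E = - D - D ** E"
    using assms(2) by (simp add: E_def matrix_add_rdistrib matrix_diff_ldistrib algebra_simps)
  then have "norm E \<le> norm D + norm (D ** E)"
    using norm_triangle_ineq4[of "- D" "D ** E"] by simp
  also have "\<dots> \<le> norm D + norm D * norm E"
    using norm_matrix_mult_le[of D E] by simp
  finally have "norm E * (1 - norm D) \<le> norm D"
    by (simp add: algebra_simps)
  show ?thesis
  proof (rule ccontr)
    assume "\<not> norm (J - mat 1) < 1"
    then have "1 * (1 - norm D) \<le> norm E * (1 - norm D)"
      using assms(1) unfolding E_def by (intro mult_right_mono) auto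
    with \<open>norm E * (1 - norm D) \<le> norm D\<close> have "1 - norm D \<le> norm D"
      by simp
    with assms(1) show False
      by simp
  qed
qed

lemma quad_form_identity_plus_nonneg:
  fixes W :: "real^'n^'n"
  assumes "norm W \<le> 1"
  shows "0 \<le> quad_form (mat 1 + W) b"
proof -
  have "\<bar>b \<bullet> (W *v b)\<bar> \<le> norm b * (norm W * norm b)"
    using Cauchy_Schwarz_ineq2[of b "W *v b"] norm_matrix_vector_mult_le[of W b]
    by (meson mult_left_mono norm_ge_zero order_trans)
  also have "\<dots> = norm W * (norm b)\<^sup>2"
    by (simp add: power2_eq_square)
  also have "\<dots> \<le> (norm b)\<^sup>2"
    using assms by (simp add: mult_left_le_one_le)
  also have "\<dots> = b \<bullet> b"
    by (simp add: power2_norm_eq_inner)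
  finally show ?thesis
    by (simp add: quad_form_def matrix_vector_mult_add_rdistrib inner_add_right)
qed

section \<open>Congruence by the inverse square root\<close>

lemma pd_mat_sqrt:
  fixes X :: "real^'n^'n"
  assumes "pd_mat X"
  shows "transpose (mat_sqrt X) = mat_sqrt X" "mat_sqrt X ** mat_sqrt X = X" "invertible (mat_sqrt X)"
proof -
  have psd: "psd_mat X"
    using assms by (rule pd_imp_psd_mat)
  show "transpose (mat_sqrt X) = mat_sqrt X" "mat_sqrt X ** mat_sqrt X = X"
    using mat_sqrt[OF psd] by (auto simp: psd_mat_def)
  then show "invertible (mat_sqrt X)"
    using pd_mat_invertible[OF assms]
    by (metis invertible_iff_ker_0 matrix_vector_mul_assoc matrix_vector_mult_0_right)
qed

definition whiten :: "real^'n^'n \<Rightarrow> real^'n^'n \<Rightarrow> real^'n^'n" where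
  "whiten X M = matrix_inv (mat_sqrt X) ** M ** matrix_inv (mat_sqrt X)"

context
  fixes X :: "real^'n^'n"
  assumes pd: "pd_mat X"
begin

private abbreviation "S \<equiv> mat_sqrt X"
private abbreviation "Si \<equiv> matrix_inv (mat_sqrt X)"

private lemma sqrt_inv: "S ** Si = mat 1" "Si ** S = mat 1"
  using matrix_inv_inverse pd_mat_sqrt(3)[OF pd] by auto

private lemma sqrt_inv_cancel: "A ** S ** Si = A" "A ** Si ** S = A"
  by (simp_all add: matrix_mul_assoc[symmetric] sqrt_inv)

private lemma sqrt_sqrt: "S ** S = X"
  by (rule pd_mat_sqrt(2)[OF pd])

lemma matrix_inv_pd_mat: "matrix_inv X = Si ** Si"
proof (rule matrix_inv_unique)
  have "X ** (Si ** Si) = S ** S ** Si ** Si"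
    by (simp add: sqrt_sqrt matrix_mul_assoc)
  then show "X ** (Si ** Si) = mat 1"
    by (simp add: sqrt_inv_cancel sqrt_inv)
qed

lemma mat_sqrt_whiten: "S ** whiten X M ** S = M"
  by (simp add: whiten_def matrix_mul_assoc sqrt_inv_cancel sqrt_inv)

lemma whiten_self: "whiten X X = mat 1"
proof -
  have "whiten X X = Si ** (S ** S) ** Si"
    by (simp add: whiten_def sqrt_sqrt)
  then show ?thesis
    by (simp add: matrix_mul_assoc sqrt_inv_cancel sqrt_inv)
qed

lemma whiten_diff: "whiten X (A - B) = whiten X A - whiten X B"
  by (simp add: whiten_def matrix_diff_ldistrib matrix_diff_rdistrib)

lemma transpose_whiten: "transpose M = M \<Longrightarrow> transpose (whiten X M) = whiten X M"
  using transpose_matrix_inv_symmetric[OF pd_mat_sqrt(3,1)[OF pd]]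
  by (simp add: whiten_def matrix_transpose_mul matrix_mul_assoc)

lemma whiten_eq_congruence_matrix_inv: "whiten X M = S ** (matrix_inv X ** M ** matrix_inv X) ** S"
  by (simp add: matrix_inv_pd_mat whiten_def matrix_mul_assoc sqrt_inv_cancel sqrt_inv)

lemma trace_whiten: "trace (V ** M) = trace (whiten X V ** (S ** M ** S))"
proof -
  have "trace (whiten X V ** (S ** M ** S)) = trace (Si ** (V ** M ** S))"
    by (simp add: whiten_def matrix_mul_assoc sqrt_inv_cancel)
  also have "\<dots> = trace (V ** M ** S ** Si)"
    by (rule trace_mul_sym)
  finally show ?thesis
    by (simp add: sqrt_inv_cancel)
qed

lemma norm_congruence_matrix_inv_diff_lt_1:
  assumes "invertible Y" and "norm (whiten X (Y - X)) < 1/2"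
  shows "norm (S ** (matrix_inv Y - matrix_inv X) ** S) < 1"
proof -
  define J where "J = S ** matrix_inv Y ** S"
  have "mat 1 + whiten X (Y - X) = Si ** Y ** Si"
    by (simp add: whiten_diff whiten_self) (simp add: whiten_def)
  then have "(mat 1 + whiten X (Y - X)) ** J = Si ** (Y ** matrix_inv Y) ** S"
    by (simp add: J_def matrix_mul_assoc sqrt_inv_cancel)
  also have "\<dots> = mat 1"
    by (simp add: matrix_inv_inverse(1)[OF assms(1)] sqrt_inv)
  finally have "norm (J - mat 1) < 1"
    using norm_identity_plus_inverse_minus_identity assms(2) by blast
  moreover have "S ** matrix_inv X ** S = mat 1"
    by (simp add: matrix_inv_pd_mat matrix_mul_assoc sqrt_inv_cancel sqrt_inv)
  ultimately show ?thesis
    by (simp add: J_def matrix_diff_ldistrib matrix_diff_rdistrib)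
qed

end

section \<open>The Hessian of the log-determinant barrier\<close>

lemma LamX_diff: "LamX Lam (v - w) = LamX Lam v - LamX Lam w"
  by (simp add: LamX_def scaleR_diff_left sum_subtractf)

lemma LamX_axis: "LamX Lam (axis w 1) = Lam w"
proof -
  have "LamX Lam (axis w 1) = (\<Sum>u\<in>UNIV. if u = w then Lam u else 0)"
    unfolding LamX_def by (rule sum.cong) (auto simp: axis_def)
  then show ?thesis
    by simp
qed

lemma LamX_component: "LamX Lam x $ r $ s = (\<Sum>u\<in>UNIV. x$u * Lam u $ r $ s)"
  by (simp add: LamX_def sum_component)

lemma Lam_adj_diff: "Lam_adj Lam (M - N) = Lam_adj Lam M - Lam_adj Lam N"
  by (simp add: Lam_adj_def vec_eq_iff matrix_diff_ldistrib trace_sub)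

lemma Lam_adj_sum: "Lam_adj Lam (\<Sum>i\<in>I. M i) = (\<Sum>i\<in>I. Lam_adj Lam (M i))"
  by (simp add: Lam_adj_def vec_eq_iff matrix_mult_sum_right trace_sum)

lemma Lam_adj_scaleR: "Lam_adj Lam (c *\<^sub>R M) = c *\<^sub>R Lam_adj Lam M"
  by (simp add: Lam_adj_def vec_eq_iff matrix_scalar_ac scalar_matrix_assoc[symmetric] trace_scaleR)

lemma inner_Lam_adj: "w \<bullet> Lam_adj Lam M = trace (transpose (LamX Lam w) ** M)"
proof -
  have "w \<bullet> Lam_adj Lam M = (\<Sum>u\<in>UNIV. trace ((w$u *\<^sub>R transpose (Lam u)) ** M))"
    by (simp add: inner_vec_def Lam_adj_def scalar_matrix_assoc[symmetric] trace_scaleR)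
  also have "\<dots> = trace (transpose (LamX Lam w) ** M)"
    by (simp add: LamX_def transpose_sum transpose_scalar matrix_mult_sum_left trace_sum)
  finally show ?thesis .
qed

lemma hess_mult_vector:
  "hess Lam x *v v = Lam_adj Lam (matrix_inv (LamX Lam x) ** LamX Lam v ** matrix_inv (LamX Lam x))"
proof -
  let ?Xi = "matrix_inv (LamX Lam x)"
  have "hess Lam x *v v = (\<Sum>w\<in>UNIV. v$w *\<^sub>R Lam_adj Lam (?Xi ** Lam w ** ?Xi))"
    by (simp add: matrix_mult_sum column_def hess_def LamX_axis scalar_mult_eq_scaleR)
  also have "\<dots> = Lam_adj Lam (?Xi ** LamX Lam v ** ?Xi)"
    unfolding LamX_def[of Lam v] Lam_adj_sum[symmetric] Lam_adj_scaleR[symmetric]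
    by (simp add: matrix_mult_sum_left matrix_mult_sum_right matrix_scalar_ac scalar_matrix_assoc[symmetric])
  finally show ?thesis .
qed

locale lambda_map =
  fixes Lam :: "'u::finite \<Rightarrow> real^'r::finite^'r"
  assumes transpose_Lam: "transpose (Lam u) = Lam u"
    and LamX_eq_0_imp: "LamX Lam w = 0 \<Longrightarrow> w = 0"
begin

lemma transpose_LamX: "transpose (LamX Lam v) = LamX Lam v"
  by (simp add: LamX_def transpose_sum transpose_scalar transpose_Lam)

context
  fixes x :: "real^'u"
  assumes pd_x: "pd_mat (LamX Lam x)"
begin

private abbreviation "X \<equiv> LamX Lam x"
private abbreviation "H \<equiv> hess Lam x"

lemma inner_hess: "v \<bullet> (H *v w) = whiten X (LamX Lam v) \<bullet> whiten X (LamX Lam w)"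
proof -
  have "v \<bullet> (H *v w) = trace (LamX Lam v ** (matrix_inv X ** LamX Lam w ** matrix_inv X))"
    by (simp add: hess_mult_vector inner_Lam_adj transpose_LamX)
  also have "\<dots> = trace (whiten X (LamX Lam v) ** whiten X (LamX Lam w))"
    by (subst trace_whiten[OF pd_x]) (simp only: whiten_eq_congruence_matrix_inv[OF pd_x])
  also have "\<dots> = whiten X (LamX Lam v) \<bullet> whiten X (LamX Lam w)"
    by (simp add: trace_mult_eq_inner_transpose transpose_whiten[OF pd_x] transpose_LamX)
  finally show ?thesis .
qed

lemma quad_form_hess: "quad_form H v = (norm (whiten X (LamX Lam v)))\<^sup>2"
  by (simp add: quad_form_def inner_hess power2_norm_eq_inner)

lemma psd_mat_hess: "psd_mat H"
  unfolding psd_mat_iff_quad_form quad_form_hess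
  by (auto intro: symmetric_if_inner_mult_vector_symmetric simp: inner_hess inner_commute)

lemma local_norm_eq_norm_whiten: "local_norm Lam x v = norm (whiten X (LamX Lam v))"
  using norm_mat_sqrt_mult_vector[OF psd_mat_hess, of v]
  by (simp add: local_norm_def quad_form_hess power2_eq_iff_nonneg)

lemma invertible_hess: "invertible H"
  unfolding invertible_iff_ker_0
proof (intro allI impI)
  fix v assume "H *v v = 0"
  then have "whiten X (LamX Lam v) = 0"
    using quad_form_hess[of v] by (simp add: quad_form_def)
  then have "LamX Lam v = 0"
    using mat_sqrt_whiten[OF pd_x, of "LamX Lam v"] by simp
  then show "v = 0"
    by (rule LamX_eq_0_imp)
qed

lemma hess_mult_self: "H *v x = - grad Lam x"
  using matrix_inv_inverse(2)[OF pd_mat_invertible[OF pd_x]]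
  by (simp add: hess_mult_vector grad_def matrix_mul_assoc[symmetric])

end

lemma norm_whiten_newton_step_lt_1:
  assumes pd_x: "pd_mat (LamX Lam x)" and pd_y: "pd_mat (LamX Lam y)"
    and close: "local_norm Lam x (x - y) < 1/2"
  shows "norm (whiten (LamX Lam x) (LamX Lam (matrix_inv (hess Lam x) *v (- grad Lam y) - x))) < 1"
proof -
  define X Y where "X = LamX Lam x" and "Y = LamX Lam y"
  define z where "z = matrix_inv (hess Lam x) *v (- grad Lam y)"
  define W where "W = whiten X (LamX Lam (z - x))"
  define E where "E = mat_sqrt X ** (matrix_inv Y - matrix_inv X) ** mat_sqrt X"
  have "norm (whiten X (Y - X)) = local_norm Lam x (x - y)"
    by (simp add: local_norm_eq_norm_whiten[OF pd_x] X_def Y_def LamX_diff whiten_diff[OF pd_x]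
        norm_minus_commute)
  then have "norm E < 1"
    unfolding E_def using pd_x pd_y close
    by (simp add: X_def Y_def norm_congruence_matrix_inv_diff_lt_1 pd_mat_invertible)
  have "hess Lam x *v (z - x) = Lam_adj Lam (matrix_inv Y - matrix_inv X)"
    using matrix_inv_inverse(1)[OF invertible_hess[OF pd_x]] hess_mult_self[OF pd_x]
    by (simp add: z_def matrix_vector_mult_diff_distrib matrix_vector_mul_assoc grad_def Lam_adj_diff
        X_def Y_def)
  then have "(norm W)\<^sup>2 = trace (LamX Lam (z - x) ** (matrix_inv Y - matrix_inv X))"
    using inner_hess[OF pd_x, of "z - x" "z - x"]
    by (simp add: power2_norm_eq_inner W_def X_def inner_Lam_adj transpose_LamX)
  also have "\<dots> = trace (W ** E)"
    unfolding W_def E_def X_def by (rule trace_whiten[OF pd_x])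
  also have "\<dots> \<le> norm W * norm E"
    using norm_cauchy_schwarz[of W "transpose E"] by (simp add: trace_mult_eq_inner_transpose norm_transpose)
  finally have "norm W \<le> norm E"
    by (metis mult_le_cancel_left norm_ge_zero not_le order.trans power2_eq_square)
  with \<open>norm E < 1\<close> show ?thesis
    by (simp add: W_def X_def z_def)
qed

lemma psd_mat_LamX_newton_step:
  assumes pd_x: "pd_mat (LamX Lam x)" and pd_y: "pd_mat (LamX Lam y)"
    and close: "local_norm Lam x (x - y) < 1/2"
  shows "psd_mat (LamX Lam (matrix_inv (hess Lam x) *v (- grad Lam y)))"
proof -
  define X where "X = LamX Lam x"
  define z where "z = matrix_inv (hess Lam x) *v (- grad Lam y)"
  define W where "W = whiten X (LamX Lam (z - x))"
  have "norm W < 1"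
    using norm_whiten_newton_step_lt_1[OF assms] by (simp add: W_def X_def z_def)
  have "transpose (mat_sqrt X) ** (mat 1 + W) ** mat_sqrt X = X + LamX Lam (z - x)"
    using pd_x by (simp add: X_def W_def pd_mat_sqrt matrix_add_ldistrib matrix_add_rdistrib mat_sqrt_whiten)
  also have "\<dots> = LamX Lam z"
    by (simp add: X_def LamX_diff)
  finally have "quad_form (LamX Lam z) a = quad_form (mat 1 + W) (mat_sqrt X *v a)" for a
    by (metis quad_form_congruence)
  then show ?thesis
    using \<open>norm W < 1\<close> quad_form_identity_plus_nonneg[of W]
    by (simp add: psd_mat_iff_quad_form transpose_LamX z_def)
qed

end

section \<open>Multivariate polynomials\<close>

lemma lookup_mult_pairs:
  "Poly_Mapping.lookup (f * g) k =
    (\<Sum>(a, b). Poly_Mapping.lookup f a * Poly_Mapping.lookup g b when k = a + b)"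
  by transfer (simp add: prod_fun_unfold_prod)

lemma finite_nonempty_ex_max_image:
  fixes \<mu> :: "'a \<Rightarrow> 'b::linorder"
  assumes "finite A" "A \<noteq> {}"
  obtains a where "a \<in> A" "\<And>b. b \<in> A \<Longrightarrow> \<mu> b \<le> \<mu> a"
proof -
  have "Max (\<mu> ` A) \<in> \<mu> ` A"
    using assms by (intro Max_in) auto
  then obtain a where a: "a \<in> A" "\<mu> a = Max (\<mu> ` A)"
    by auto
  show ?thesis
  proof (rule that[OF a(1)])
    fix b assume "b \<in> A"
    then show "\<mu> b \<le> \<mu> a"
      using assms(1) a(2) by (simp add: Max_ge)
  qed
qed

lemma poly_mapping_mult_nonzero_if_order_embedding:
  fixes f g :: "'k::comm_monoid_add \<Rightarrow>\<^sub>0 'b::semiring_no_zero_divisors"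
    and \<mu> :: "'k \<Rightarrow> 'l::{ordered_cancel_comm_monoid_add, linorder}"
  assumes inj: "inj \<mu>" and add: "\<And>a b. \<mu> (a + b) = \<mu> a + \<mu> b"
    and "f \<noteq> 0" "g \<noteq> 0"
  shows "f * g \<noteq> 0"
proof -
  obtain a0 where a0: "a0 \<in> Poly_Mapping.keys f" "\<And>a. a \<in> Poly_Mapping.keys f \<Longrightarrow> \<mu> a \<le> \<mu> a0"
    using finite_nonempty_ex_max_image[of "Poly_Mapping.keys f" \<mu>] \<open>f \<noteq> 0\<close> by auto
  obtain b0 where b0: "b0 \<in> Poly_Mapping.keys g" "\<And>b. b \<in> Poly_Mapping.keys g \<Longrightarrow> \<mu> b \<le> \<mu> b0"
    using finite_nonempty_ex_max_image[of "Poly_Mapping.keys g" \<mu>] \<open>g \<noteq> 0\<close> by auto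
  \<comment> \<open>the leading monomials for the order pulled back along \<mu> multiply without cancellation\<close>
  have unique: "a = a0 \<and> b = b0"
    if "a \<in> Poly_Mapping.keys f" "b \<in> Poly_Mapping.keys g" "a0 + b0 = a + b" for a b
  proof -
    have "\<mu> a + \<mu> b = \<mu> a0 + \<mu> b0" "\<mu> a \<le> \<mu> a0" "\<mu> b \<le> \<mu> b0"
      using that a0 b0 add by metis+
    then have "\<mu> a = \<mu> a0 \<and> \<mu> b = \<mu> b0"
      using add_strict_right_mono[of "\<mu> a" "\<mu> a0" "\<mu> b"] add_le_less_mono[of "\<mu> a" "\<mu> a0" "\<mu> b" "\<mu> b0"]
      by (auto simp: order_le_less)
    then show ?thesis
      using inj by (simp add: inj_eq)
  qed
  have "(Poly_Mapping.lookup f a * Poly_Mapping.lookup g b when a0 + b0 = a + b) =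
      (Poly_Mapping.lookup f a * Poly_Mapping.lookup g b when (a0, b0) = (a, b))" for a b
    using unique[of a b] by (cases "Poly_Mapping.lookup f a = 0 \<or> Poly_Mapping.lookup g b = 0")
      (auto simp: when_def in_keys_iff)
  then have "(\<lambda>(a, b). Poly_Mapping.lookup f a * Poly_Mapping.lookup g b when a0 + b0 = a + b) =
      (\<lambda>ab. (case ab of (a, b) \<Rightarrow> Poly_Mapping.lookup f a * Poly_Mapping.lookup g b) when (a0, b0) = ab)"
    by (auto simp: fun_eq_iff)
  then have "Poly_Mapping.lookup (f * g) (a0 + b0) = Poly_Mapping.lookup f a0 * Poly_Mapping.lookup g b0"
    unfolding lookup_mult_pairs by simp
  also have "\<dots> \<noteq> 0"
    using a0(1) b0(1) by (simp add: in_keys_iff)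
  finally show ?thesis
    by auto
qed

lemma mpoly_mult_nonzero:
  fixes f g :: "'v::finite mpoly"
  assumes "f \<noteq> 0" "g \<noteq> 0"
  shows "f * g \<noteq> 0"
proof -
  \<comment> \<open>\<open>'v\<close> is not ordered, so exponent vectors are moved into the linearly ordered monoid
    \<open>nat \<Rightarrow>\<^sub>0 nat\<close> along an enumeration of the variables\<close>
  obtain enc :: "'v \<Rightarrow> nat" where "inj enc"
    using finite_imp_inj_to_nat_seg[of "UNIV :: 'v set"] by auto
  define \<mu> :: "('v \<Rightarrow>\<^sub>0 nat) \<Rightarrow> (nat \<Rightarrow>\<^sub>0 nat)" where
    "\<mu> m = (\<Sum>v\<in>UNIV. Poly_Mapping.single (enc v) (Poly_Mapping.lookup m v))" for m
  have "Poly_Mapping.lookup (\<mu> m) (enc v) = Poly_Mapping.lookup m v" for m v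
  proof -
    have "Poly_Mapping.lookup (\<mu> m) (enc v) = (\<Sum>w\<in>UNIV. if w = v then Poly_Mapping.lookup m v else 0)"
      unfolding \<mu>_def lookup_sum
      by (rule sum.cong) (auto simp: lookup_single when_def inj_eq[OF \<open>inj enc\<close>])
    then show ?thesis
      by simp
  qed
  then have "inj \<mu>"
    by (metis injI poly_mapping_eqI)
  moreover have "\<mu> (a + b) = \<mu> a + \<mu> b" for a b
    by (simp add: \<mu>_def lookup_add single_add sum.distrib)
  ultimately show ?thesis
    using poly_mapping_mult_nonzero_if_order_embedding assms by blast
qed

lemma psmult_eq_single_mult: "psmult c p = Poly_Mapping.single 0 c * p"
  unfolding psmult_def using mult_map_scale_conv_mult[of c p] by (simp add: mult.commute)

lemma lincomb_add: "lincomb q (a + b) = lincomb q a + lincomb q b"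
  by (simp add: lincomb_def psmult_eq_single_mult single_add distrib_right sum.distrib)

lemma lincomb_diff: "lincomb q (a - b) = lincomb q a - lincomb q b"
  by (simp add: lincomb_def psmult_eq_single_mult single_diff left_diff_distrib sum_subtractf)

lemma lincomb_zero [simp]: "lincomb q 0 = 0"
  by (simp add: lincomb_def psmult_eq_single_mult)

lemma lincomb_sum: "lincomb q (\<Sum>i\<in>I. a i) = (\<Sum>i\<in>I. lincomb q (a i))"
  by (induction I rule: infinite_finite_induct) (simp_all add: lincomb_add)

lemma single_0_mult: "Poly_Mapping.single 0 (a * b) = Poly_Mapping.single 0 a * Poly_Mapping.single 0 b"
  by (simp add: mult_single)

lemma lincomb_scaleR: "lincomb q (c *\<^sub>R a) = Poly_Mapping.single 0 c * lincomb q a"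
  by (simp add: lincomb_def psmult_eq_single_mult single_0_mult sum_distrib_left mult.assoc)

lemma lincomb_inj:
  assumes "fam_basis_on UNIV q B" "lincomb q a = lincomb q b"
  shows "a = b"
proof -
  have "lincomb q (a - b) = 0"
    using assms(2) by (simp add: lincomb_diff)
  then have "(a - b) $ u = 0" for u
    using assms(1) unfolding fam_basis_on_def lincomb_def by blast
  then show ?thesis
    by (simp add: vec_eq_iff)
qed

section \<open>The weighted sum-of-squares cone\<close>

\<comment> \<open>\<open>gram_vec Lam a = \<Lambda>\<^sup>*(a a\<^sup>T)\<close>\<close>
definition gram_vec :: "('u::finite \<Rightarrow> real^'r^'r) \<Rightarrow> real^'r \<Rightarrow> real^'u" where
  "gram_vec Lam a = (\<chi> u. quad_form (Lam u) a)"

lemma inner_gram_vec: "gram_vec Lam a \<bullet> z = quad_form (LamX Lam z) a"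
  by (simp add: gram_vec_def LamX_def quad_form_matrix_sum quad_form_matrix_scaleR inner_vec_def
      mult.commute)

lemma gram_vec_eq_sum: "gram_vec Lam b = (\<Sum>r\<in>UNIV. \<Sum>s\<in>UNIV. (b$r * b$s) *\<^sub>R (\<chi> u. Lam u $ r $ s))"
  by (simp add: gram_vec_def quad_form_entries vec_eq_iff)

definition block_part :: "('r \<Rightarrow> 'm) \<Rightarrow> 'm \<Rightarrow> real^'r \<Rightarrow> real^'r" where
  "block_part blk i a = (\<chi> r. if blk r = i then a $ r else 0)"

lemma quad_form_block_diagonal:
  fixes M :: "real^'r::finite^'r" and blk :: "'r \<Rightarrow> 'm::finite"
  assumes "\<And>r s. blk r \<noteq> blk s \<Longrightarrow> M $ r $ s = 0"
  shows "quad_form M a = (\<Sum>i\<in>UNIV. quad_form M (block_part blk i a))"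
proof -
  have "(\<Sum>i\<in>UNIV. quad_form M (block_part blk i a)) =
      (\<Sum>i\<in>UNIV. \<Sum>r\<in>UNIV. \<Sum>s\<in>UNIV. if blk r = i \<and> blk s = i then a$r * a$s * M$r$s else 0)"
    unfolding quad_form_entries block_part_def by (intro sum.cong refl) auto
  also have "\<dots> = (\<Sum>r\<in>UNIV. \<Sum>s\<in>UNIV. \<Sum>i\<in>UNIV. if blk r = i \<and> blk s = i then a$r * a$s * M$r$s else 0)"
    by (subst sum.swap, rule sum.cong[OF refl], rule sum.swap)
  also have "\<dots> = (\<Sum>r\<in>UNIV. \<Sum>s\<in>UNIV. if blk s = blk r then a$r * a$s * M$r$s else 0)"
  proof (intro sum.cong refl)
    fix r s
    have "(\<lambda>i. if blk r = i \<and> blk s = i then a$r * a$s * M$r$s else 0) =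
        (\<lambda>i. if i = blk r then (if blk s = blk r then a$r * a$s * M$r$s else 0) else 0)"
      by auto
    then show "(\<Sum>i\<in>UNIV. if blk r = i \<and> blk s = i then a$r * a$s * M$r$s else 0) =
        (if blk s = blk r then a$r * a$s * M$r$s else 0)"
      by (simp only: sum.delta finite UNIV_I if_True)
  qed
  also have "\<dots> = quad_form M a"
    unfolding quad_form_entries using assms by (intro sum.cong refl) auto
  finally show ?thesis ..
qed

lemma inner_pos_if_interior_dual_cone:
  fixes x v :: "'a::real_inner"
  assumes x: "x \<in> interior (dual_cone K)" and v: "v \<in> K" "v \<noteq> 0"
  shows "0 < v \<bullet> x"
proof -
  obtain e where e: "e > 0" "ball x e \<subseteq> dual_cone K"
    using x mem_interior by blast
  define t where "t = e / (2 * norm v)"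
  have t: "t > 0" "dist x (x - t *\<^sub>R v) < e"
    using e v by (simp_all add: t_def dist_norm)
  then have "x - t *\<^sub>R v \<in> dual_cone K"
    using e by auto
  then have "0 \<le> v \<bullet> (x - t *\<^sub>R v)"
    using v unfolding dual_cone_def by blast
  then have "t * (v \<bullet> v) \<le> v \<bullet> x"
    by (simp add: inner_diff_right)
  moreover have "0 < t * (v \<bullet> v)"
    using t v by simp
  ultimately show ?thesis
    by linarith
qed

lemma eq_0_if_orthogonal_to_set_with_interior:
  fixes w :: "'a::real_inner"
  assumes "interior K \<noteq> {}" and orth: "\<And>s. s \<in> K \<Longrightarrow> s \<bullet> w = 0"
  shows "w = 0"
proof (rule ccontr)
  assume "w \<noteq> 0"
  obtain s e where e: "e > 0" "ball s e \<subseteq> K"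
    using assms(1) mem_interior by blast
  define t where "t = e / (2 * norm w)"
  have "t > 0" "s + t *\<^sub>R w \<in> K" "s \<in> K"
    using e \<open>w \<noteq> 0\<close> by (auto simp: t_def dist_norm intro!: subsetD[OF e(2)])
  then have "(s + t *\<^sub>R w) \<bullet> w = 0" "s \<bullet> w = 0"
    using orth by blast+
  then have "t * (w \<bullet> w) = 0"
    by (simp add: inner_add_left)
  with \<open>t > 0\<close> \<open>w \<noteq> 0\<close> show False
    by simp
qed

lemma inner_sum_list_gram_vec:
  "(\<Sum>a\<leftarrow>as. gram_vec Lam a) \<bullet> z = (\<Sum>a\<leftarrow>as. quad_form (LamX Lam z) a)"
  by (induction as) (simp_all add: inner_add_left inner_gram_vec)

locale wsos_cone =
  fixes g :: "'m::finite \<Rightarrow> 'v::finite mpoly"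
    and d :: "'m \<Rightarrow> nat"
    and q :: "'u::finite \<Rightarrow> 'v mpoly"
    and blk :: "'r::finite \<Rightarrow> 'm"
    and P :: "'r \<Rightarrow> 'v mpoly"
    and Lam :: "'u \<Rightarrow> real^'r^'r"
  assumes g_nz: "\<And>i. g i \<noteq> 0"
    and q_basis: "fam_basis_on UNIV q (Vspace g d)"
    and proper: "proper_cone (Sigma_vec q g d)"
    and P_basis: "\<And>i. fam_basis_on {r. blk r = i} P (polys_le (d i))"
    and Lam_offblock: "\<And>u r s. blk r \<noteq> blk s \<Longrightarrow> Lam u $ r $ s = 0"
    and Lam_block: "\<And>r s. blk r = blk s \<Longrightarrow>
                       (\<Sum>u\<in>UNIV. psmult (Lam u $ r $ s) (q u)) = g (blk r) * P r * P s"
begin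

definition block_poly :: "'m \<Rightarrow> real^'r \<Rightarrow> 'v mpoly" where
  "block_poly i a = (\<Sum>r\<in>{r. blk r = i}. psmult (a $ r) (P r))"

lemma lincomb_Lam_entries: "blk r = blk s \<Longrightarrow> lincomb q (\<chi> u. Lam u $ r $ s) = g (blk r) * P r * P s"
  using Lam_block by (simp add: lincomb_def)

lemma lincomb_gram_vec_block_part:
  "lincomb q (gram_vec Lam (block_part blk i a)) = g i * block_poly i a * block_poly i a"
proof -
  define b where "b = block_part blk i a"
  define c :: "'r \<Rightarrow> 'v mpoly" where "c r = Poly_Mapping.single 0 (b $ r)" for r
  have "lincomb q (gram_vec Lam b) = (\<Sum>r\<in>UNIV. \<Sum>s\<in>UNIV. c r * c s * lincomb q (\<chi> u. Lam u $ r $ s))"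
    by (simp add: gram_vec_eq_sum lincomb_sum lincomb_scaleR single_0_mult c_def)
  also have "\<dots> = (\<Sum>r\<in>UNIV. \<Sum>s\<in>UNIV. g i * ((c r * P r) * (c s * P s)))"
  proof (intro sum.cong refl)
    fix r s
    show "c r * c s * lincomb q (\<chi> u. Lam u $ r $ s) = g i * ((c r * P r) * (c s * P s))"
    proof (cases "blk r = i \<and> blk s = i")
      case True
      then show ?thesis
        using lincomb_Lam_entries[of r s] by (simp add: mult_ac)
    next
      case False
      then have "c r = 0 \<or> c s = 0"
        by (auto simp: c_def b_def block_part_def)
      then show ?thesis
        by auto
    qed
  qed
  also have "\<dots> = g i * (\<Sum>r\<in>UNIV. c r * P r) * (\<Sum>s\<in>UNIV. c s * P s)"
    unfolding mult.assoc[of "g i"] sum_product by (simp add: sum_distrib_left)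
  also have "(\<Sum>r\<in>UNIV. c r * P r) = block_poly i a"
  proof -
    have "(\<Sum>r\<in>UNIV. c r * P r) = (\<Sum>r\<in>UNIV. if blk r = i then psmult (a $ r) (P r) else 0)"
      by (intro sum.cong refl) (simp add: c_def b_def block_part_def psmult_eq_single_mult)
    then show ?thesis
      by (simp add: block_poly_def sum.If_cases)
  qed
  finally show ?thesis
    by (simp add: b_def)
qed

lemma tdeg_block_poly: "tdeg (block_poly i a) \<le> d i"
  using P_basis[of i] unfolding fam_basis_on_def polys_le_def block_poly_def by blast

lemma ex_block_poly_eq: "tdeg h \<le> d i \<Longrightarrow> \<exists>a. h = block_poly i a"
proof -
  assume "tdeg h \<le> d i"
  then obtain c where "h = (\<Sum>r\<in>{r. blk r = i}. psmult (c r) (P r))"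
    using P_basis[of i] unfolding fam_basis_on_def polys_le_def by blast
  then have "h = block_poly i (\<chi> r. c r)"
    by (simp add: block_poly_def)
  then show ?thesis
    by blast
qed

lemma block_poly_eq_0_imp: "block_poly i a = 0 \<Longrightarrow> blk r = i \<Longrightarrow> a $ r = 0"
  using P_basis[of i] unfolding fam_basis_on_def block_poly_def by blast

lemma gram_vec_block_part_in_Sigma_vec: "gram_vec Lam (block_part blk i a) \<in> Sigma_vec q g d"
proof -
  define \<sigma> where "\<sigma> j = (if j = i then block_poly i a * block_poly i a else 0)" for j
  have "\<sigma> j \<in> sos_le (d j)" for j
  proof (cases "j = i")
    case True
    then show ?thesis
      using tdeg_block_poly[of i a] unfolding sos_le_def \<sigma>_def
      by (intro CollectI exI[of _ "[block_poly i a]"]) simp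
  next
    case False
    then show ?thesis
      unfolding sos_le_def \<sigma>_def by (intro CollectI exI[of _ "[]"]) simp
  qed
  moreover have "(\<Sum>j\<in>UNIV. g j * \<sigma> j) = g i * block_poly i a * block_poly i a"
    by (simp add: \<sigma>_def if_distrib mult.assoc cong: if_cong)
  ultimately show ?thesis
    unfolding Sigma_vec_def WSOS_def by (simp add: lincomb_gram_vec_block_part) metis
qed

lemma ex_sum_list_gram_vec_eq_weighted_sos:
  assumes "\<forall>h\<in>set hs. tdeg h \<le> d i"
  shows "\<exists>as. lincomb q (\<Sum>a\<leftarrow>as. gram_vec Lam a) = g i * (\<Sum>h\<leftarrow>hs. h * h)"
  using assms
proof (induction hs)
  case Nil
  show ?case
    by (intro exI[of _ "[]"]) simp
next
  case (Cons h hs)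
  then obtain as where "lincomb q (\<Sum>a\<leftarrow>as. gram_vec Lam a) = g i * (\<Sum>h\<leftarrow>hs. h * h)"
    by auto
  moreover obtain a where "h = block_poly i a"
    using Cons.prems ex_block_poly_eq by auto
  ultimately have "lincomb q (\<Sum>a\<leftarrow>block_part blk i a # as. gram_vec Lam a) = g i * (\<Sum>h\<leftarrow>h # hs. h * h)"
    by (simp add: lincomb_add lincomb_gram_vec_block_part algebra_simps)
  then show ?case
    by blast
qed

lemma Sigma_vec_imp_sum_list_gram_vec:
  assumes "s \<in> Sigma_vec q g d"
  obtains as where "s = (\<Sum>a\<leftarrow>as. gram_vec Lam a)"
proof -
  obtain \<sigma> where \<sigma>: "lincomb q s = (\<Sum>i\<in>UNIV. g i * \<sigma> i)" "\<And>i. \<sigma> i \<in> sos_le (d i)"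
    using assms unfolding Sigma_vec_def WSOS_def by blast
  have "\<exists>as. lincomb q (\<Sum>a\<leftarrow>as. gram_vec Lam a) = (\<Sum>i\<in>I. g i * \<sigma> i)" for I
  proof (induction I rule: infinite_finite_induct)
    case (infinite I)
    then show ?case
      by (intro exI[of _ "[]"]) simp
  next
    case empty
    then show ?case
      by (intro exI[of _ "[]"]) simp
  next
    case (insert i I)
    obtain as where as: "lincomb q (\<Sum>a\<leftarrow>as. gram_vec Lam a) = (\<Sum>i\<in>I. g i * \<sigma> i)"
      using insert.IH by blast
    obtain hs where "\<sigma> i = (\<Sum>h\<leftarrow>hs. h * h)" "\<forall>h\<in>set hs. tdeg h \<le> d i"
      using \<sigma>(2)[of i] unfolding sos_le_def by blast
    then obtain bs where "lincomb q (\<Sum>a\<leftarrow>bs. gram_vec Lam a) = g i * \<sigma> i"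
      using ex_sum_list_gram_vec_eq_weighted_sos[of hs i] by auto
    with as insert.hyps have "lincomb q (\<Sum>a\<leftarrow>bs @ as. gram_vec Lam a) = (\<Sum>i\<in>insert i I. g i * \<sigma> i)"
      by (simp add: lincomb_add)
    then show ?case
      by blast
  qed
  then obtain as where "lincomb q (\<Sum>a\<leftarrow>as. gram_vec Lam a) = lincomb q s"
    using \<sigma>(1) by auto
  then have "s = (\<Sum>a\<leftarrow>as. gram_vec Lam a)"
    by (rule lincomb_inj[OF q_basis, symmetric])
  then show ?thesis
    by (rule that)
qed

lemma dual_cone_if_psd_LamX:
  assumes "psd_mat (LamX Lam z)"
  shows "z \<in> dual_cone (Sigma_vec q g d)"
  unfolding dual_cone_def
proof (intro CollectI ballI)
  fix s assume "s \<in> Sigma_vec q g d"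
  then obtain as where "s = (\<Sum>a\<leftarrow>as. gram_vec Lam a)"
    by (rule Sigma_vec_imp_sum_list_gram_vec)
  then show "0 \<le> s \<bullet> z"
    using assms by (simp add: inner_sum_list_gram_vec psd_mat_iff_quad_form) (auto intro!: sum_list_nonneg)
qed

lemma transpose_Lam: "transpose (Lam u) = Lam u"
proof -
  have "Lam u $ r $ s = Lam u $ s $ r" for r s
  proof (cases "blk r = blk s")
    case True
    then have "lincomb q (\<chi> u. Lam u $ r $ s) = lincomb q (\<chi> u. Lam u $ s $ r)"
      by (simp add: lincomb_Lam_entries mult_ac)
    then have "(\<chi> u. Lam u $ r $ s) = (\<chi> u. Lam u $ s $ r)"
      by (rule lincomb_inj[OF q_basis])
    then show ?thesis
      by (simp add: vec_eq_iff)
  next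
    case False
    then show ?thesis
      using Lam_offblock[of r s u] Lam_offblock[of s r u] by simp
  qed
  then show ?thesis
    by (simp add: transpose_def vec_eq_iff)
qed

lemma LamX_eq_0_imp:
  assumes "LamX Lam w = 0"
  shows "w = 0"
proof (rule eq_0_if_orthogonal_to_set_with_interior)
  show "interior (Sigma_vec q g d) \<noteq> {}"
    using proper by (simp add: proper_cone_def)
  fix s assume "s \<in> Sigma_vec q g d"
  then obtain as where "s = (\<Sum>a\<leftarrow>as. gram_vec Lam a)"
    by (rule Sigma_vec_imp_sum_list_gram_vec)
  then show "s \<bullet> w = 0"
    using assms by (simp add: inner_sum_list_gram_vec quad_form_def)
qed

sublocale lambda_map Lam
  using transpose_Lam LamX_eq_0_imp by unfold_locales

lemma pd_LamX_if_interior_dual_cone: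
  assumes z: "z \<in> interior (dual_cone (Sigma_vec q g d))"
  shows "pd_mat (LamX Lam z)"
proof -
  have nonneg: "0 \<le> quad_form (LamX Lam z) (block_part blk i a)" for i a
    using subsetD[OF interior_subset z] gram_vec_block_part_in_Sigma_vec[of i a]
    by (auto simp: dual_cone_def inner_gram_vec[symmetric])
  have "0 < quad_form (LamX Lam z) a" if a: "a \<noteq> 0" for a
  proof -
    obtain r where "a $ r \<noteq> 0"
      using a by (metis vec_eq_iff zero_index)
    then have "block_poly (blk r) a \<noteq> 0"
      using block_poly_eq_0_imp[of "blk r" a r] by auto
    then have "lincomb q (gram_vec Lam (block_part blk (blk r) a)) \<noteq> 0"
      using g_nz[of "blk r"] by (simp add: lincomb_gram_vec_block_part mpoly_mult_nonzero)
    then have "gram_vec Lam (block_part blk (blk r) a) \<noteq> 0"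
      by auto
    then have "0 < quad_form (LamX Lam z) (block_part blk (blk r) a)"
      using inner_pos_if_interior_dual_cone[OF z gram_vec_block_part_in_Sigma_vec]
      by (simp add: inner_gram_vec)
    moreover have "quad_form (LamX Lam z) a = (\<Sum>i\<in>UNIV. quad_form (LamX Lam z) (block_part blk i a))"
      by (rule quad_form_block_diagonal) (simp add: LamX_component Lam_offblock)
    ultimately show ?thesis
      using nonneg sum_pos2[of UNIV "blk r" "\<lambda>i. quad_form (LamX Lam z) (block_part blk i a)"]
      by simp
  qed
  then show ?thesis
    by (simp add: pd_mat_def transpose_LamX)
qed

end

theorem corollary1:
  fixes g :: "'m::finite \<Rightarrow> 'v::finite mpoly"
    and d :: "'m \<Rightarrow> nat"
    and q :: "'u::finite \<Rightarrow> 'v mpoly"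
    and blk :: "'r::finite \<Rightarrow> 'm"
    and P :: "'r \<Rightarrow> 'v mpoly"
    and Lam :: "'u \<Rightarrow> real^'r^'r"
    and x y :: "real^'u"
  assumes g_nz: "\<And>i. g i \<noteq> 0"
    and q_basis: "fam_basis_on UNIV q (Vspace g d)"
    and proper: "proper_cone (Sigma_vec q g d)"
    and P_basis: "\<And>i. fam_basis_on {r. blk r = i} P (polys_le (d i))"
    and Lam_offblock: "\<And>u r s. blk r \<noteq> blk s \<Longrightarrow> Lam u $ r $ s = 0"
    and Lam_block: "\<And>r s. blk r = blk s \<Longrightarrow>
                       (\<Sum>u\<in>UNIV. psmult (Lam u $ r $ s) (q u)) = g (blk r) * P r * P s"
    and x_int: "x \<in> interior (dual_cone (Sigma_vec q g d))"
    and y_int: "y \<in> interior (dual_cone (Sigma_vec q g d))"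
    and close: "local_norm Lam x (x - y) < 1/2"
  shows "matrix_inv (hess Lam x) *v (- grad Lam y) \<in> dual_cone (Sigma_vec q g d)"
proof -
  interpret wsos_cone g d q blk P Lam
    using g_nz q_basis proper P_basis Lam_offblock Lam_block by unfold_locales
  show ?thesis
    using dual_cone_if_psd_LamX psd_mat_LamX_newton_step pd_LamX_if_interior_dual_cone x_int y_int close
    by blast
qed

end
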